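(* If $n>0$ then $v_{2l-1}=v_{2l}=l$ for all $l=1,\dots,n$.
   Context: $k$ is a field of characteristic zero, $\mathcal O_n=k[x]/(x^{n+1})$, elements of $\mathcal O_n$ identified with multiplication operators, $\operatorname{ad}_x(\delta)=x\delta-\delta x$. The order filtration is $\mathcal D^p(\mathcal O_n)=\{\delta\in\operatorname{End}_k(\mathcal O_n):[f_0,[f_1,\dots,[f_p,\delta]\dots]]=0\ \forall f_i\in\mathcal O_n\}$. For $\delta\in\mathcal D^p(\mathcal O_n)$, $\operatorname{ad}_x^p(\delta)$ is multiplication by an element of $\mathcal O_n$ and $\operatorname{ad}_x^p:\mathcal D^p(\mathcal O_n)\to\mathcal O_n$ is $\mathcal O_n$-linear, so its image is an ideal $(x^{v_p})$ of $\mathcal O_n$; $v_p\in\{0,\dots,n\}$ denotes the corresponding exponent. *)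

theory Defs
  imports "HOL-Computational_Algebra.Polynomial"
begin

text \<open>O_n = k[x]/(x^(n+1)) is modelled by the polynomials of degree at most n
(basis 1, x, ..., x^n); the product is the truncated product.\<close>

definition On :: "nat \<Rightarrow> 'k::field poly set" where
  "On n = {p. degree p \<le> n}"

definition mulO :: "nat \<Rightarrow> 'k::field poly \<Rightarrow> 'k poly \<Rightarrow> 'k poly" where
  "mulO n f g = (f * g) mod monom 1 (n + 1)"

text \<open>End_k(O_n): k-linear maps O_n -> O_n, represented extensionally
(value 0 outside O_n) so that equality of maps is equality of functions.\<close>

definition EndO :: "nat \<Rightarrow> ('k::field poly \<Rightarrow> 'k poly) set" where
  "EndO n = {d. (\<forall>p\<in>On n. d p \<in> On n)
              \<and> (\<forall>p\<in>On n. \<forall>q\<in>On n. d (p + q) = d p + d q)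
              \<and> (\<forall>c. \<forall>p\<in>On n. d (smult c p) = smult c (d p))
              \<and> (\<forall>p. p \<notin> On n \<longrightarrow> d p = 0)}"

definition M :: "nat \<Rightarrow> 'k::field poly \<Rightarrow> ('k poly \<Rightarrow> 'k poly)" where
  "M n f = (\<lambda>p. if p \<in> On n then mulO n f p else 0)"

definition comm :: "('k::field poly \<Rightarrow> 'k poly) \<Rightarrow> ('k poly \<Rightarrow> 'k poly) \<Rightarrow> ('k poly \<Rightarrow> 'k poly)" where
  "comm a b = (\<lambda>p. a (b p) - b (a p))"

definition Dp :: "nat \<Rightarrow> nat \<Rightarrow> ('k::field poly \<Rightarrow> 'k poly) set" where
  "Dp n p = {d \<in> EndO n. \<forall>fs. length fs = p + 1 \<and> set fs \<subseteq> On n \<longrightarrow>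
                 foldr (\<lambda>f e. comm (M n f) e) fs d = (\<lambda>_. 0)}"

definition adx :: "nat \<Rightarrow> ('k::field poly \<Rightarrow> 'k poly) \<Rightarrow> ('k poly \<Rightarrow> 'k poly)" where
  "adx n d = comm (M n [:0, 1:]) d"

definition adx_image :: "nat \<Rightarrow> nat \<Rightarrow> 'k::field poly set" where
  "adx_image n p = {g \<in> On n. \<exists>d \<in> Dp n p. (adx n ^^ p) d = M n g}"

definition idealO :: "nat \<Rightarrow> nat \<Rightarrow> 'k::field poly set" where
  "idealO n v = {mulO n (monom 1 v) h | h. h \<in> On n}"

definition vexp :: "'k::field itself \<Rightarrow> nat \<Rightarrow> nat \<Rightarrow> nat" where
  "vexp TYPE('k) n p = (THE v. v \<le> n \<and> (adx_image n p :: 'k poly set) = idealO n v)"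

end

theory Submission
  imports Defs
begin

(* Write an operator d on O_n as a matrix in the basis 1, x, ..., x^n.  Composing with x on
   the left shifts the matrix one row down, composing on the right one column left, so ad_x^k
   acts on the m-th superdiagonal s \<mapsto> entry (s - m, s), extended by zero, as (-1)^k times
   the k-th forward difference.  An operator lies in D^p iff ad_x^(p+1) kills it, i.e. iff each
   superdiagonal has vanishing (p+1)-st differences on [0, n + m] and hence agrees there with a
   polynomial of degree <= p.  That polynomial vanishes at the 2m points s < m and
   n < s <= n + m, so the superdiagonal is zero when 2m > p.  Reading the coefficient of x^i in
   ad_x^p d = M g off the superdiagonal m = p - i shows g \<in> (x^l) for l = (p + 1) div 2.
   Conversely, the weighted shift x^j \<mapsto> w j x^(j - (p - l)), with w a polynomial of degree p
   vanishing at those 2(p - l) <= p points and with p-th difference (-1)^p, satisfies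
   ad_x^p d = M x^l.  Hence v_p = (p + 1) div 2. *)

section \<open>Forward differences\<close>

definition fdiff :: "(nat \<Rightarrow> 'a::ab_group_add) \<Rightarrow> nat \<Rightarrow> 'a" where
  "fdiff c s = c (Suc s) - c s"

lemma fdiff_pow_Suc: "(fdiff ^^ Suc k) c s = (fdiff ^^ k) c (Suc s) - (fdiff ^^ k) c s"
  by (simp add: fdiff_def)

lemma fdiff_pow_Suc_right: "(fdiff ^^ Suc k) c = (fdiff ^^ k) (fdiff c)"
  by (simp add: funpow_Suc_right del: funpow.simps)

lemma fdiff_pow_cong:
  "(\<And>t. t \<le> k \<Longrightarrow> c (j + t) = c' (j + t)) \<Longrightarrow> (fdiff ^^ k) c j = (fdiff ^^ k) c' j"
proof (induction k arbitrary: j)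
  case 0
  then show ?case using 0[of 0] by simp
next
  case (Suc k)
  have "(fdiff ^^ k) c j = (fdiff ^^ k) c' j"
    using Suc by auto
  moreover have "(fdiff ^^ k) c (Suc j) = (fdiff ^^ k) c' (Suc j)"
    using Suc.IH[of "Suc j"] Suc.prems[of "Suc _"] by auto
  ultimately show ?case
    by (simp only: fdiff_pow_Suc)
qed

lemma fdiff_pow_eq_0:
  assumes "\<And>t. t \<le> k \<Longrightarrow> c (j + t) = 0"
  shows "(fdiff ^^ k) c j = 0"
proof -
  have "(fdiff ^^ k) (\<lambda>_. 0) = (\<lambda>_. 0 :: 'a)" for k
    by (induction k) (simp_all add: fdiff_def)
  then show ?thesis
    using fdiff_pow_cong[of k c j "\<lambda>_. 0"] assms by simp
qed

lemma fdiff_pow_sum: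
  "(fdiff ^^ k) (\<lambda>s. \<Sum>t\<in>T. w t * f t s) s = (\<Sum>t\<in>T. w t * (fdiff ^^ k) (f t) s)"
  for w :: "'b \<Rightarrow> 'a::comm_ring"
proof (induction k arbitrary: s)
  case (Suc k)
  show ?case
    by (simp only: fdiff_pow_Suc Suc) (simp add: sum_subtractf[symmetric] algebra_simps)
qed simp

lemma fdiff_pow_shift: "(fdiff ^^ k) c (Suc s) = (fdiff ^^ k) (\<lambda>t. c (Suc t)) s"
  by (induction k arbitrary: s) (simp_all add: fdiff_def)

lemma fdiff_pow_power:
  assumes "i \<le> k"
  shows "(fdiff ^^ k) (\<lambda>s. of_nat s ^ i) s
    = (if i = k then fact k else (0::'a::{comm_ring_1,semiring_char_0}))"
  using assms
proof (induction k arbitrary: i s)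
  case (Suc k)
  have "fdiff (\<lambda>s. of_nat s ^ i) = (\<lambda>s. \<Sum>t<i. of_nat (i choose t) * (of_nat s :: 'a) ^ t)"
  proof
    fix s
    have "(of_nat (Suc s) :: 'a) ^ i = (\<Sum>t\<le>i. of_nat (i choose t) * of_nat s ^ t)"
      using binomial_ring[of "of_nat s :: 'a" 1 i] by (simp add: ac_simps)
    then show "fdiff (\<lambda>s. (of_nat s :: 'a) ^ i) s = (\<Sum>t<i. of_nat (i choose t) * of_nat s ^ t)"
      by (simp add: fdiff_def lessThan_Suc_atMost[symmetric])
  qed
  then have "(fdiff ^^ Suc k) (\<lambda>s. of_nat s ^ i) s
      = (\<Sum>t<i. of_nat (i choose t) * (if t = k then fact k else (0::'a)))"
    using Suc by (simp only: fdiff_pow_Suc_right fdiff_pow_sum) (intro sum.cong; simp)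
  also have "\<dots> = (if i = Suc k then fact (Suc k) else 0)"
    using Suc.prems by (auto simp: sum.delta if_distrib[of "\<lambda>x. _ * x"] cong: if_cong)
  finally show ?case .
qed simp

lemma fdiff_pow_poly:
  fixes Q :: "'a::field_char_0 poly"
  assumes "degree Q \<le> p"
  shows "(fdiff ^^ p) (\<lambda>s. poly Q (of_nat s)) j = coeff Q p * fact p"
proof -
  have "poly Q x = (\<Sum>i\<le>p. coeff Q i * x ^ i)" for x
    using assms
    by (simp add: poly_altdef sum.mono_neutral_left[of "{..p}" "{..degree Q}"] coeff_eq_0)
  then have "(fdiff ^^ p) (\<lambda>s. poly Q (of_nat s)) j
      = (\<Sum>i\<le>p. coeff Q i * (fdiff ^^ p) (\<lambda>s. of_nat s ^ i) j)"
    by (simp only: fdiff_pow_sum)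
  also have "\<dots> = (\<Sum>i\<le>p. coeff Q i * (if i = p then fact p else 0))"
    by (intro sum.cong) (simp_all add: fdiff_pow_power)
  finally show ?thesis
    by (simp add: if_distrib[of "\<lambda>x. _ * x"] cong: if_cong)
qed

lemma newton_forward_difference:
  "c j = (\<Sum>k\<le>j. of_nat (j choose k) * (fdiff ^^ k) c 0)" for c :: "nat \<Rightarrow> 'a::comm_ring_1"
proof (induction j arbitrary: c)
  case (Suc j)
  define A where "A k = (fdiff ^^ k) c 0" for k
  have shift: "(fdiff ^^ k) (\<lambda>t. c (Suc t)) 0 = A k + A (Suc k)" for k
    by (simp add: A_def fdiff_pow_shift[symmetric] fdiff_def)
  have "c (Suc j)
      = (\<Sum>k\<le>j. of_nat (j choose k) * A k) + (\<Sum>k\<le>j. of_nat (j choose k) * A (Suc k))"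
    using Suc.IH[of "\<lambda>t. c (Suc t)"] by (simp add: shift algebra_simps sum.distrib)
  also have "(\<Sum>k\<le>j. of_nat (j choose k) * A k)
      = A 0 + (\<Sum>k\<le>j. of_nat (j choose Suc k) * A (Suc k))"
    using sum.atMost_Suc_shift[of "\<lambda>k. of_nat (j choose k) * A k" j] by (simp add: binomial_eq_0)
  also have "A 0 + (\<Sum>k\<le>j. of_nat (j choose Suc k) * A (Suc k))
        + (\<Sum>k\<le>j. of_nat (j choose k) * A (Suc k))
      = (\<Sum>k\<le>Suc j. of_nat (Suc j choose k) * A k)"
    by (subst sum.atMost_Suc_shift) (simp add: sum.distrib algebra_simps)
  finally show ?case
    by (simp add: A_def)
qed simp

definition binomial_poly :: "nat \<Rightarrow> 'a::field_char_0 poly" where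
  "binomial_poly k = smult (inverse (fact k)) (\<Prod>i<k. [:- of_nat i, 1:])"

lemma degree_binomial_poly: "degree (binomial_poly k) = k"
  by (simp add: binomial_poly_def degree_prod_sum_eq)

lemma poly_binomial_poly: "poly (binomial_poly k) (of_nat j) = of_nat (j choose k)"
proof -
  have "(\<Prod>i<k. (of_nat j :: 'a) - of_nat i) = fact k * (of_nat j gchoose k)"
    by (simp add: gbinomial_mult_fact atLeast0LessThan)
  then show ?thesis
    by (simp add: binomial_poly_def poly_prod binomial_gbinomial)
qed

lemma fdiff_pow_eq_0_imp_poly:
  fixes c :: "nat \<Rightarrow> 'a::field_char_0"
  assumes "\<And>j. j + Suc p \<le> N \<Longrightarrow> (fdiff ^^ Suc p) c j = 0"
  obtains Q where "degree Q \<le> p" "\<And>j. j \<le> N \<Longrightarrow> poly Q (of_nat j) = c j"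
proof
  define A where "A k = (fdiff ^^ k) c 0" for k
  have A_eq_0: "A k = 0" if "p < k" "k \<le> N" for k
  proof -
    have "k = (k - Suc p) + Suc p"
      using that by simp
    then have "A k = (fdiff ^^ (k - Suc p)) ((fdiff ^^ Suc p) c) 0"
      unfolding A_def by (metis funpow_add o_apply)
    also have "\<dots> = 0"
      by (rule fdiff_pow_eq_0) (use that assms in auto)
    finally show ?thesis .
  qed
  show "degree (\<Sum>k\<le>p. smult (A k) (binomial_poly k)) \<le> p"
    by (intro degree_sum_le)
      (auto intro: order_trans[OF degree_smult_le] simp: degree_binomial_poly)
  fix j assume "j \<le> N"
  have "c j = (\<Sum>k\<le>j. of_nat (j choose k) * A k)"
    unfolding A_def by (rule newton_forward_difference)
  also have "\<dots> = (\<Sum>k\<le>max j p. of_nat (j choose k) * A k)"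
    by (rule sum.mono_neutral_left) (auto simp: binomial_eq_0)
  also have "\<dots> = (\<Sum>k\<le>p. of_nat (j choose k) * A k)"
    by (rule sum.mono_neutral_right) (use A_eq_0 \<open>j \<le> N\<close> in auto)
  finally show "poly (\<Sum>k\<le>p. smult (A k) (binomial_poly k)) (of_nat j) = c j"
    by (simp add: poly_sum poly_binomial_poly mult.commute)
qed

lemma fdiff_pow_eq_0_many_zeros:
  fixes c :: "nat \<Rightarrow> 'a::field_char_0"
  assumes "\<And>j. j + Suc p \<le> N \<Longrightarrow> (fdiff ^^ Suc p) c j = 0"
    and "p < card {j. j \<le> N \<and> c j = 0}" and "j \<le> N"
  shows "c j = 0"
proof -
  obtain Q where Q: "degree Q \<le> p" "\<And>j. j \<le> N \<Longrightarrow> poly Q (of_nat j) = c j"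
    using fdiff_pow_eq_0_imp_poly assms(1) by blast
  define Z where "Z = {j. j \<le> N \<and> c j = 0}"
  have "card (of_nat ` Z :: 'a set) = card Z"
    by (simp add: card_image inj_on_def)
  then have "Q = 0"
    using Q assms(2) by (intro poly_eqI_degree[of "of_nat ` Z"]) (auto simp: Z_def)
  then show ?thesis
    using Q(2)[OF \<open>j \<le> N\<close>] by simp
qed

section \<open>Operators on O_n and their matrices\<close>

lemma coeff_mod_monom_Suc:
  "coeff (q mod monom (1::'k::field) (Suc n)) i = (if i \<le> n then coeff q i else 0)"
proof -
  let ?X = "monom (1::'k) (Suc n)"
  have "q mod ?X = 0 \<or> degree (q mod ?X) < Suc n"
    using degree_mod_less[of ?X q] by (simp add: degree_monom_eq)
  moreover have "coeff q i = coeff ((q div ?X) * ?X) i + coeff (q mod ?X) i"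
    by (simp only: div_mult_mod_eq flip: coeff_add)
  moreover have "i \<le> n \<Longrightarrow> coeff ((q div ?X) * ?X) i = 0"
    by (simp add: mult.commute[of _ ?X] coeff_monom_mult)
  ultimately show ?thesis
    by (auto intro: coeff_eq_0)
qed

lemma coeff_mulO: "coeff (mulO n f g) i = (if i \<le> n then coeff (f * g) i else 0)"
  by (simp add: mulO_def coeff_mod_monom_Suc)

lemma On_coeffI: "(\<And>i. n < i \<Longrightarrow> coeff p i = 0) \<Longrightarrow> p \<in> On n"
  by (simp add: On_def degree_le)

lemma coeff_On: "p \<in> On n \<Longrightarrow> n < i \<Longrightarrow> coeff p i = 0"
  by (simp add: On_def coeff_eq_0)

lemma mulO_On: "mulO n f g \<in> On n"
  by (rule On_coeffI) (simp add: coeff_mulO)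

lemma On_zero [simp]: "0 \<in> On n"
  by (simp add: On_def)

lemma On_add: "p \<in> On n \<Longrightarrow> q \<in> On n \<Longrightarrow> p + q \<in> On n"
  by (simp add: On_def degree_add_le)

lemma On_diff: "p \<in> On n \<Longrightarrow> q \<in> On n \<Longrightarrow> p - q \<in> On n"
  by (simp add: On_def degree_diff_le)

lemma On_smult: "p \<in> On n \<Longrightarrow> smult c p \<in> On n"
  by (simp add: On_def)

lemma On_monom: "j \<le> n \<Longrightarrow> monom c j \<in> On n"
  by (simp add: On_def) (meson degree_monom_le order_trans)

lemma On_sum: "(\<And>j. j \<in> S \<Longrightarrow> u j \<in> On n) \<Longrightarrow> sum u S \<in> On n"
  by (induction S rule: infinite_finite_induct) (auto intro: On_add)

lemma monom_notin_On: "n < j \<Longrightarrow> monom (1::'k::field) j \<notin> On n"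
  by (simp add: On_def degree_monom_eq)

lemma mod_monom_Suc_On: "p \<in> On n \<Longrightarrow> (p::'k::field poly) mod monom 1 (Suc n) = p"
  by (rule mod_poly_less) (simp add: On_def degree_monom_eq)

lemma M_On: "M n f q \<in> On n"
  by (simp add: M_def mulO_On)

lemma M_out: "q \<notin> On n \<Longrightarrow> M n f q = 0"
  by (simp add: M_def)

lemma M_in: "q \<in> On n \<Longrightarrow> M n f q = mulO n f q"
  by (simp add: M_def)

lemma M_zero [simp]: "M n f 0 = 0"
  by (simp add: M_def mulO_def)

lemma M_EndO: "M n (f::'k::field poly) \<in> EndO n"
  unfolding EndO_def
proof (intro CollectI conjI ballI allI impI)
  fix p q :: "'k poly"
  assume "p \<in> On n" "q \<in> On n"
  then show "M n f (p + q) = M n f p + M n f q"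
    by (simp add: M_def On_add mulO_def distrib_left poly_mod_add_left)
next
  fix c and p :: "'k poly"
  assume "p \<in> On n"
  then show "M n f (smult c p) = smult c (M n f p)"
    by (simp add: M_def On_smult mulO_def mod_smult_left)
qed (auto simp: M_On M_out)

lemma M_mult: "M n f (M n g q) = M n (f * g) (q::'k::field poly)"
  by (cases "q \<in> On n")
    (simp_all add: M_in M_out mulO_On, simp_all add: mulO_def mod_simps ac_simps)

lemma M_commute: "M n f (M n g q) = M n g (M n f (q::'k::field poly))"
  by (simp add: M_mult mult.commute)

lemma M_pCons: "q \<in> On n \<Longrightarrow> M n (pCons a f) q = smult a q + M n [:0, 1:] (M n f q)"
  by (rule poly_eqI)
    (auto simp: M_in coeff_mulO mulO_On coeff_pCons coeff_On split: nat.split)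

lemma EndO_On: "d \<in> EndO n \<Longrightarrow> d p \<in> On n"
  unfolding EndO_def by (cases "p \<in> On n") auto

lemma EndO_out: "d \<in> EndO n \<Longrightarrow> p \<notin> On n \<Longrightarrow> d p = 0"
  unfolding EndO_def by auto

lemma EndO_add: "d \<in> EndO n \<Longrightarrow> p \<in> On n \<Longrightarrow> q \<in> On n \<Longrightarrow> d (p + q) = d p + d q"
  unfolding EndO_def by auto

lemma EndO_smult: "d \<in> EndO n \<Longrightarrow> p \<in> On n \<Longrightarrow> d (smult c p) = smult c (d p)"
  unfolding EndO_def by auto

lemma EndO_zero: "d \<in> EndO n \<Longrightarrow> d 0 = 0"
  using EndO_smult[of d n 0 0] by simp

lemma EndO_diff: "d \<in> EndO n \<Longrightarrow> p \<in> On n \<Longrightarrow> q \<in> On n \<Longrightarrow> d (p - q) = d p - d q"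
  using EndO_add[of d n "p - q" q] by (simp add: On_diff)

lemma EndO_sum:
  assumes "d \<in> EndO n" "\<And>j. j \<in> S \<Longrightarrow> u j \<in> On n"
  shows "d (\<Sum>j\<in>S. smult (w j) (u j)) = (\<Sum>j\<in>S. smult (w j) (d (u j)))"
  using assms(2)
proof (induction S rule: infinite_finite_induct)
  case (insert j S)
  then show ?case
    using assms(1) by (simp add: EndO_add EndO_smult On_smult On_sum)
qed (use assms(1) in \<open>simp_all add: EndO_zero\<close>)

lemma comm_EndO:
  assumes "a \<in> EndO n" "b \<in> EndO n"
  shows "comm a b \<in> EndO n"
  unfolding EndO_def[of n] comm_def mem_Collect_eq using assms
  by (auto simp: On_diff smult_diff_right EndO_add EndO_smult EndO_On EndO_zero EndO_out)

lemma adx_pow_EndO: "d \<in> EndO n \<Longrightarrow> (adx n ^^ k) d \<in> EndO n"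
  by (induction k) (auto simp: adx_def intro: comm_EndO M_EndO)

definition entry :: "('k::field poly \<Rightarrow> 'k poly) \<Rightarrow> nat \<Rightarrow> nat \<Rightarrow> 'k" where
  "entry d i j = coeff (d (monom 1 j)) i"

lemma entry_out_col: "d \<in> EndO n \<Longrightarrow> n < j \<Longrightarrow> entry d i j = 0"
  by (simp add: entry_def EndO_out monom_notin_On)

lemma entry_M:
  "entry (M n g) i j = (if i \<le> n \<and> j \<le> n then coeff (g * monom 1 j) i else (0::'k::field))"
  by (cases "j \<le> n") (simp_all add: entry_def M_in M_out On_monom monom_notin_On coeff_mulO)

lemma coeff_M_x:
  "q \<in> On n \<Longrightarrow>
    coeff (M n [:0, 1:] q) i = (if 0 < i \<and> i \<le> n then coeff q (i - 1) else (0::'k::field))"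
  by (auto simp: M_in coeff_mulO coeff_pCons split: nat.splits)

lemma entry_adx:
  assumes d: "d \<in> EndO n"
  shows "entry (adx n d) i j
    = (if 0 < i \<and> i \<le> n then entry d (i - 1) j else 0) - entry d i (Suc j)"
proof (cases "j \<le> n")
  case True
  have x_monom: "M n [:0, 1:] (monom 1 j) = (if j < n then monom 1 (Suc j) else 0)"
    using True by (intro poly_eqI) (auto simp: coeff_M_x On_monom coeff_monom)
  have "d (M n [:0, 1:] (monom 1 j)) = d (monom 1 (Suc j))"
    unfolding x_monom using True d by (auto simp: EndO_zero EndO_out monom_notin_On)
  then show ?thesis
    using d by (simp add: entry_def adx_def comm_def coeff_M_x EndO_On)
qed (use d in \<open>simp add: entry_def adx_def comm_def EndO_out M_out monom_notin_On EndO_zero\<close>)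

lemma EndO_eqI:
  assumes d: "d \<in> EndO n" and d': "d' \<in> EndO n"
    and entries: "\<And>i j. i \<le> n \<Longrightarrow> j \<le> n \<Longrightarrow> entry d i j = entry d' i j"
  shows "d = d'"
proof
  fix q
  show "d q = d' q"
  proof (cases "q \<in> On n")
    case True
    have q: "q = (\<Sum>j\<le>n. smult (coeff q j) (monom 1 j))"
      using True by (simp add: poly_as_sum_of_monoms' On_def smult_monom)
    have expand: "e q = (\<Sum>j\<le>n. smult (coeff q j) (e (monom 1 j)))" if "e \<in> EndO n" for e
    proof -
      have "e (\<Sum>j\<le>n. smult (coeff q j) (monom 1 j))
          = (\<Sum>j\<le>n. smult (coeff q j) (e (monom 1 j)))"
        by (rule EndO_sum[OF that]) (simp add: On_monom)
      then show ?thesis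
        by (simp only: q[symmetric])
    qed
    have "d (monom 1 j) = d' (monom 1 j)" if "j \<le> n" for j
      using entries that d d' by (intro poly_eqI) (metis EndO_On coeff_On entry_def not_le)
    then show ?thesis
      by (simp add: expand[OF d] expand[OF d'])
  qed (simp add: EndO_out[OF d] EndO_out[OF d'])
qed

definition superdiag :: "('k::field poly \<Rightarrow> 'k poly) \<Rightarrow> nat \<Rightarrow> nat \<Rightarrow> 'k" where
  "superdiag d m s = (if m \<le> s then entry d (s - m) s else 0)"

lemma entry_adx_pow:
  assumes "d \<in> EndO n" "i \<le> n" "i + m = j + k"
  shows "entry ((adx n ^^ k) d) i j = (-1) ^ k * (fdiff ^^ k) (superdiag d m) j"
  using assms(2,3)
proof (induction k arbitrary: i j)
  case 0
  then have "m \<le> j" "j - m = i"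
    by simp_all
  then show ?case
    by (simp add: superdiag_def)
next
  case (Suc k)
  let ?c = "superdiag d m"
  have lower: "(if 0 < i \<and> i \<le> n then entry ((adx n ^^ k) d) (i - 1) j else 0)
      = (-1) ^ k * (fdiff ^^ k) ?c j"
  proof (cases "i = 0")
    case True
    then have "(fdiff ^^ k) ?c j = 0"
      using Suc.prems by (intro fdiff_pow_eq_0) (simp add: superdiag_def)
    then show ?thesis
      using True by simp
  qed (use Suc in simp)
  have upper: "entry ((adx n ^^ k) d) i (Suc j) = (-1) ^ k * (fdiff ^^ k) ?c (Suc j)"
    using Suc by simp
  show ?case
    using entry_adx[OF adx_pow_EndO[OF assms(1)], of k i j] lower upper
    by (simp add: fdiff_def[of "(fdiff ^^ k) ?c"] algebra_simps)
qed

lemma entry_adx_pow_below: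
  assumes "d \<in> EndO n" and "\<And>i j. j + t < i \<Longrightarrow> entry d i j = 0"
  shows "j + t + k < i \<Longrightarrow> entry ((adx n ^^ k) d) i j = 0"
proof (induction k arbitrary: i j)
  case (Suc k)
  then show ?case
    by (simp add: entry_adx adx_pow_EndO[OF assms(1)])
qed (simp add: assms(2))

lemma M_commute_if_commute_x:
  fixes e :: "'k::field poly \<Rightarrow> 'k poly"
  assumes e: "e \<in> EndO n" and x: "\<And>q. M n [:0, 1:] (e q) = e (M n [:0, 1:] q)"
  shows "M n f (e q) = e (M n f q)"
proof (induction f arbitrary: q rule: pCons_induct)
  case 0
  have "M n 0 = (\<lambda>_. 0 :: 'k poly)"
    by (simp add: M_def mulO_def fun_eq_iff)
  then show ?case
    using e by (simp add: EndO_zero)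
next
  case (pCons a f)
  show ?case
  proof (cases "q \<in> On n")
    case True
    have "M n (pCons a f) (e q) = smult a (e q) + M n [:0, 1:] (M n f (e q))"
      using e by (simp add: M_pCons[of _ n a f] EndO_On)
    also have "\<dots> = smult a (e q) + e (M n [:0, 1:] (M n f q))"
      by (simp add: pCons.IH x)
    also have "\<dots> = e (M n (pCons a f) q)"
      using e True by (simp add: M_pCons[of _ n a f] EndO_add EndO_smult On_smult M_On)
    finally show ?thesis .
  qed (use e in \<open>simp add: EndO_out M_out EndO_zero\<close>)
qed

lemma comm_M_adx:
  fixes e :: "'k::field poly \<Rightarrow> 'k poly"
  assumes e: "e \<in> EndO n"
  shows "comm (M n f) (adx n e) = adx n (comm (M n f) e)"
proof
  fix q :: "'k poly"
  let ?x = "M n [:0, 1:]" and ?f = "M n f"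
  have "comm ?f (adx n e) q = ?f (?x (e q)) - ?f (e (?x q)) - ?x (e (?f q)) + e (?x (?f q))"
    using e by (simp add: adx_def comm_def EndO_diff[OF M_EndO] EndO_On M_On)
  also have "\<dots> = ?x (?f (e q)) - ?x (e (?f q)) - ?f (e (?x q)) + e (?f (?x q))"
    by (simp only: M_commute[of n f "[:0, 1:]"]) (simp add: algebra_simps)
  also have "\<dots> = adx n (comm ?f e) q"
    using e by (simp add: adx_def comm_def EndO_diff[OF M_EndO] EndO_On M_On)
  finally show "comm ?f (adx n e) q = adx n (comm ?f e) q" .
qed

lemma comm_M_adx_pow:
  "e \<in> EndO n \<Longrightarrow> comm (M n f) ((adx n ^^ k) e) = (adx n ^^ k) (comm (M n f) e)"
  by (induction k) (simp_all add: comm_M_adx adx_pow_EndO)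

lemma foldr_comm_M_eq_0:
  "d \<in> EndO n \<Longrightarrow> (adx n ^^ length fs) d = (\<lambda>_. 0)
    \<Longrightarrow> foldr (\<lambda>f e. comm (M n f) e) fs d = (\<lambda>_. 0)"
proof (induction fs arbitrary: d rule: rev_induct)
  case (snoc f fs)
  let ?e = "(adx n ^^ length fs) d"
  have "adx n ?e = (\<lambda>_. 0)"
    using snoc.prems(2) by simp
  then have "M n [:0, 1:] (?e q) = ?e (M n [:0, 1:] q)" for q
    by (simp add: adx_def[of n ?e] comm_def fun_eq_iff)
  then have "comm (M n f) ?e = (\<lambda>_. 0)"
    using adx_pow_EndO[OF snoc.prems(1)]
    by (simp add: comm_def fun_eq_iff M_commute_if_commute_x)
  then have "(adx n ^^ length fs) (comm (M n f) d) = (\<lambda>_. 0)"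
    by (simp add: comm_M_adx_pow[OF snoc.prems(1), symmetric])
  then show ?case
    using snoc.IH[of "comm (M n f) d"] snoc.prems(1) by (simp add: comm_EndO M_EndO)
qed simp

lemma Dp_eq:
  "(Dp n p :: ('k::field poly \<Rightarrow> 'k poly) set) = {d \<in> EndO n. (adx n ^^ Suc p) d = (\<lambda>_. 0)}"
proof (intro set_eqI iffI)
  fix d :: "'k poly \<Rightarrow> 'k poly"
  assume d: "d \<in> Dp n p"
  then have "d \<in> EndO n"
    by (simp add: Dp_def)
  moreover have "(adx n ^^ Suc p) d = (\<lambda>_. 0)"
  proof (cases "n = 0")
    case True
    then have "M n [:0, 1:] = (\<lambda>_. 0 :: 'k poly)"
      by (intro ext poly_eqI) (simp add: M_def coeff_mulO)
    then show ?thesis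
      using adx_pow_EndO[OF \<open>d \<in> EndO n\<close>, of p] by (simp add: adx_def comm_def EndO_zero)
  next
    case False
    then have "set (replicate (Suc p) [:0, 1:]) \<subseteq> On n"
      by (auto simp: On_def simp del: replicate.simps)
    moreover have "\<And>fs. length fs = Suc p \<Longrightarrow> set fs \<subseteq> On n
        \<Longrightarrow> foldr (\<lambda>f e. comm (M n f) e) fs d = (\<lambda>_. 0)"
      using d by (simp add: Dp_def)
    ultimately have "foldr (\<lambda>f e. comm (M n f) e) (replicate (Suc p) [:0, 1:]) d = (\<lambda>_. 0)"
      by (metis length_replicate)
    moreover have "foldr (\<lambda>f e. comm (M n f) e) (replicate k [:0, 1:]) d = (adx n ^^ k) d" for k
      by (induction k) (simp_all add: adx_def)
    ultimately show ?thesis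
      by (metis (no_types))
  qed
  ultimately show "d \<in> {d \<in> EndO n. (adx n ^^ Suc p) d = (\<lambda>_. 0)}"
    by simp
qed (auto simp: Dp_def intro: foldr_comm_M_eq_0)

section \<open>The image of ad_x^p\<close>

lemma idealO_eq:
  assumes "l \<le> n"
  shows "idealO n l = {g \<in> On n. \<forall>i<l. coeff g i = (0::'k::field)}"
proof (intro equalityI subsetI)
  fix g :: "'k poly"
  assume "g \<in> idealO n l"
  then show "g \<in> {g \<in> On n. \<forall>i<l. coeff g i = 0}"
    by (auto simp: idealO_def mulO_On coeff_mulO coeff_monom_mult)
next
  fix g :: "'k poly"
  assume g: "g \<in> {g \<in> On n. \<forall>i<l. coeff g i = 0}"
  have "poly_shift l g \<in> On n"
    using g by (intro On_coeffI) (auto simp: coeff_poly_shift intro: coeff_On)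
  moreover have "monom 1 l * poly_shift l g = g"
    using g by (intro poly_eqI) (auto simp: coeff_monom_mult coeff_poly_shift)
  then have "mulO n (monom 1 l) (poly_shift l g) = g"
    using g by (simp add: mulO_def mod_monom_Suc_On)
  ultimately show "g \<in> idealO n l"
    unfolding idealO_def by (metis (mono_tags) mem_Collect_eq)
qed

lemma idealO_inj:
  assumes "v \<le> n" "l \<le> n" "idealO n v = (idealO n l :: 'k::field poly set)"
  shows "v = l"
proof -
  have "monom (1::'k) a \<in> idealO n b \<longleftrightarrow> b \<le> a" if "a \<le> n" "b \<le> n" for a b
    using that by (auto simp: idealO_eq On_monom coeff_monom)
  then show ?thesis
    using assms by (metis order_refl order_antisym)
qed

lemma vexp_eqI:
  assumes "l \<le> n" "adx_image n p = (idealO n l :: 'k::field poly set)"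
  shows "vexp TYPE('k) n p = l"
  unfolding vexp_def using assms idealO_inj by (intro the_equality) auto

lemma superdiag_eq_0_if_adx_pow_eq_0:
  fixes d :: "'k::field_char_0 poly \<Rightarrow> 'k poly"
  assumes d: "d \<in> EndO n" "(adx n ^^ Suc p) d = (\<lambda>_. 0)" and "p < 2 * m"
  shows "superdiag d m s = 0"
proof -
  let ?c = "superdiag d m"
  have outside: "?c s = 0" if "s < m \<or> n < s" for s
    using that d by (auto simp: superdiag_def entry_out_col)
  show ?thesis
  proof (cases "m \<le> n \<and> s \<le> n + m")
    case True
    have fdiff_Suc_p: "(fdiff ^^ Suc p) ?c j = 0" if "j + Suc p \<le> n + m" for j
    proof (cases "m \<le> j + Suc p")
      case True
      then show ?thesis
        using entry_adx_pow[OF d(1), of "j + Suc p - m" m j "Suc p"] that d(2)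
        by (simp add: entry_def del: funpow.simps)
    next
      case False
      then have "?c (j + t) = 0" if "t \<le> Suc p" for t
        using that outside by simp
      then show ?thesis
        by (rule fdiff_pow_eq_0)
    qed
    have "2 * m = card ({..<m} \<union> {n<..n + m})"
      using True by (subst card_Un_disjoint) auto
    also have "\<dots> \<le> card {s. s \<le> n + m \<and> ?c s = 0}"
      using outside by (intro card_mono) auto
    finally have "p < card {s. s \<le> n + m \<and> ?c s = 0}"
      using \<open>p < 2 * m\<close> by linarith
    then show ?thesis
      using fdiff_pow_eq_0_many_zeros[of p "n + m" ?c s] fdiff_Suc_p True by simp
  next
    case False
    then show ?thesis
      by (intro outside) auto
  qed
qed

lemma adx_image_subset_idealO:
  assumes "2 * l \<le> Suc p" "l \<le> n"
  shows "adx_image n p \<subseteq> (idealO n l :: 'k::field_char_0 poly set)"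
proof
  fix g :: "'k poly"
  assume "g \<in> adx_image n p"
  then obtain d where g: "g \<in> On n" and d: "d \<in> EndO n" "(adx n ^^ Suc p) d = (\<lambda>_. 0)"
    and dg: "(adx n ^^ p) d = M n g"
    by (auto simp: adx_image_def Dp_eq)
  have "coeff g i = 0" if "i < l" for i
  proof -
    have "coeff g i = entry ((adx n ^^ p) d) i 0"
      using that assms by (simp add: dg entry_M)
    also have "\<dots> = (-1) ^ p * (fdiff ^^ p) (superdiag d (p - i)) 0"
      using that assms by (intro entry_adx_pow[OF d(1)]) auto
    also have "\<dots> = 0"
      using that assms by (simp add: superdiag_eq_0_if_adx_pow_eq_0[OF d] fdiff_pow_eq_0)
    finally show ?thesis .
  qed
  then show "g \<in> idealO n l"
    using g assms by (simp add: idealO_eq)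
qed

definition weighted_shift :: "nat \<Rightarrow> nat \<Rightarrow> (nat \<Rightarrow> 'k::field) \<Rightarrow> 'k poly \<Rightarrow> 'k poly" where
  "weighted_shift n m w q =
    (if q \<in> On n then (\<Sum>j\<in>{m..n}. monom (w j * coeff q j) (j - m)) else 0)"

lemma coeff_weighted_shift:
  assumes "q \<in> On n"
  shows "coeff (weighted_shift n m w q) i
    = (if i + m \<le> n then w (i + m) * coeff q (i + m) else 0)"
proof -
  have "coeff (weighted_shift n m w q) i
      = (\<Sum>j\<in>{m..n}. if j - m = i then w j * coeff q j else 0)"
    using assms by (simp add: weighted_shift_def coeff_sum coeff_monom)
  also have "\<dots> = (\<Sum>j\<in>{m..n}. if j = i + m then w j * coeff q j else 0)"
    by (rule sum.cong) auto
  finally show ?thesis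
    by (simp add: sum.delta)
qed

lemma weighted_shift_EndO: "weighted_shift n m (w :: nat \<Rightarrow> 'k::field) \<in> EndO n"
  unfolding EndO_def
proof (intro CollectI conjI ballI allI impI)
  fix p q :: "'k poly"
  assume "p \<in> On n" "q \<in> On n"
  then show "weighted_shift n m w (p + q) = weighted_shift n m w p + weighted_shift n m w q"
    by (intro poly_eqI) (simp add: coeff_weighted_shift On_add algebra_simps)
next
  fix c and p :: "'k poly"
  assume "p \<in> On n"
  then show "weighted_shift n m w (smult c p) = smult c (weighted_shift n m w p)"
    by (intro poly_eqI) (simp add: coeff_weighted_shift On_smult)
qed (auto simp: weighted_shift_def intro!: On_sum On_monom)

lemma entry_weighted_shift:
  "entry (weighted_shift n m w) i j = (if j \<le> n \<and> i + m = j then w j else 0)"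
  by (cases "j \<le> n")
    (auto simp: entry_def coeff_weighted_shift On_monom coeff_monom,
     simp add: weighted_shift_def monom_notin_On)

lemma adx_pow_weighted_shift:
  fixes w :: "nat \<Rightarrow> 'k::field"
  assumes "l \<le> p"
    and roots: "\<And>s. s < p - l \<or> n < s \<and> s \<le> n + (p - l) \<Longrightarrow> w s = 0"
    and fdiff_w: "\<And>j. (fdiff ^^ p) w j = (-1) ^ p"
  shows "(adx n ^^ p) (weighted_shift n (p - l) w) = M n (monom 1 l)"
proof (rule EndO_eqI[OF adx_pow_EndO[OF weighted_shift_EndO] M_EndO])
  fix i j
  assume "i \<le> n" "j \<le> n"
  let ?d = "weighted_shift n (p - l) w"
  have rhs: "entry (M n (monom 1 l)) i j = (if i = j + l then 1 else 0)"
    using \<open>i \<le> n\<close> \<open>j \<le> n\<close> by (simp add: entry_M coeff_monom_mult coeff_monom)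
  show "entry ((adx n ^^ p) ?d) i j = entry (M n (monom 1 l)) i j"
  proof (cases "i \<le> j + p")
    case True
    define m where "m = j + p - i"
    have lhs: "entry ((adx n ^^ p) ?d) i j = (-1) ^ p * (fdiff ^^ p) (superdiag ?d m) j"
      using True \<open>i \<le> n\<close> by (intro entry_adx_pow weighted_shift_EndO) (simp_all add: m_def)
    show ?thesis
    proof (cases "m = p - l")
      case True
      have "superdiag ?d m s = w s" if "s \<le> n + m" for s
        using roots[of s] that True by (auto simp: superdiag_def entry_weighted_shift)
      then have "(fdiff ^^ p) (superdiag ?d m) j = (fdiff ^^ p) w j"
        using \<open>i \<le> n\<close> \<open>i \<le> j + p\<close> by (intro fdiff_pow_cong) (simp add: m_def)
      moreover have "i = j + l"
        using True \<open>l \<le> p\<close> \<open>i \<le> j + p\<close> by (simp add: m_def)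
      ultimately show ?thesis
        using lhs rhs by (simp add: fdiff_w flip: power_add)
    next
      case False
      then have "superdiag ?d m = (\<lambda>_. 0)"
        by (intro ext) (auto simp: superdiag_def entry_weighted_shift)
      moreover have "i \<noteq> j + l"
        using False \<open>l \<le> p\<close> by (auto simp: m_def)
      ultimately show ?thesis
        using lhs rhs by (simp add: fdiff_pow_eq_0)
    qed
  next
    case False
    then have "entry ((adx n ^^ p) ?d) i j = 0"
      by (intro entry_adx_pow_below[where t = 0] weighted_shift_EndO)
        (auto simp: entry_weighted_shift)
    then show ?thesis
      using rhs False \<open>l \<le> p\<close> by simp
  qed
qed

lemma exists_poly_roots_coeff:
  fixes R :: "'a::idom set"
  assumes "finite R" "card R \<le> p"
  obtains Q where "degree Q \<le> p" "coeff Q p = c" "\<And>x. x \<in> R \<Longrightarrow> poly Q x = 0"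
proof
  define P where "P = monom 1 (p - card R) * (\<Prod>x\<in>R. [:- x, 1:])"
  have "(\<Prod>x\<in>R. [:- x, 1:]) \<noteq> 0"
    using assms(1) by simp
  then have "degree P = p"
    using assms by (simp add: P_def degree_mult_eq degree_monom_eq degree_prod_sum_eq)
  moreover have "lead_coeff P = 1"
    unfolding P_def lead_coeff_mult lead_coeff_prod by (simp add: degree_monom_eq)
  ultimately show "degree (smult c P) \<le> p" "coeff (smult c P) p = c"
    by simp_all
  show "poly (smult c P) x = 0" if "x \<in> R" for x
    using that assms(1) by (simp add: P_def poly_prod)
qed

lemma exists_adx_pow_eq_M_monom:
  assumes "l \<le> p" "p \<le> 2 * l"
  obtains d :: "'k::field_char_0 poly \<Rightarrow> 'k poly"
  where "d \<in> EndO n" "(adx n ^^ p) d = M n (monom 1 l)"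
proof -
  let ?m = "p - l"
  let ?R = "of_nat ` ({..<?m} \<union> {n<..n + ?m}) :: 'k set"
  have "card ?R \<le> card ({..<?m} \<union> {n<..n + ?m})"
    by (rule card_image_le) simp
  also have "\<dots> \<le> card {..<?m} + card {n<..n + ?m}"
    by (rule card_Un_le)
  finally have "card ?R \<le> p"
    using assms by simp
  then obtain Q :: "'k poly"
    where Q: "degree Q \<le> p" "coeff Q p = (-1) ^ p / fact p" "\<And>x. x \<in> ?R \<Longrightarrow> poly Q x = 0"
    using exists_poly_roots_coeff[of ?R p] by blast
  define w where "w s = poly Q (of_nat s)" for s
  have "(fdiff ^^ p) w j = (-1) ^ p" for j
    using fdiff_pow_poly[OF Q(1), of j] Q(2) by (simp add: w_def[abs_def])
  moreover have "w s = 0" if "s < ?m \<or> n < s \<and> s \<le> n + ?m" for s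
    using Q(3)[of "of_nat s"] that by (auto simp: w_def)
  ultimately have "(adx n ^^ p) (weighted_shift n ?m w) = M n (monom 1 l)"
    using assms(1) by (intro adx_pow_weighted_shift) auto
  then show ?thesis
    by (rule that[OF weighted_shift_EndO])
qed

lemma EndO_comp:
  assumes "a \<in> EndO n" "b \<in> EndO n"
  shows "a \<circ> b \<in> EndO n"
  unfolding EndO_def[of n] mem_Collect_eq using assms
  by (auto simp: EndO_add EndO_smult EndO_On EndO_zero EndO_out)

lemma adx_M_comp: "e \<in> EndO n \<Longrightarrow> adx n (M n h \<circ> e) = M n h \<circ> adx n e"
  by (rule ext)
    (simp add: adx_def comm_def EndO_diff[OF M_EndO] M_On EndO_On M_commute[of n "[:0, 1:]" h])

lemma adx_pow_M_comp:
  "e \<in> EndO n \<Longrightarrow> (adx n ^^ k) (M n h \<circ> e) = M n h \<circ> (adx n ^^ k) e"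
  by (induction k) (simp_all add: adx_M_comp adx_pow_EndO)

lemma M_mulO: "M n (mulO n f g) = M n (f * g)"
  by (rule ext) (simp add: M_def mulO_def mod_simps)

lemma adx_M: "adx n (M n g) = (\<lambda>_. 0)"
  by (rule ext) (simp add: adx_def comm_def M_commute)

lemma idealO_subset_adx_image:
  assumes "l \<le> p" "p \<le> 2 * l"
  shows "idealO n l \<subseteq> (adx_image n p :: 'k::field_char_0 poly set)"
proof
  fix g :: "'k poly"
  assume "g \<in> idealO n l"
  then obtain h where g: "g = mulO n (monom 1 l) h"
    by (auto simp: idealO_def)
  obtain d :: "'k poly \<Rightarrow> 'k poly" where d: "d \<in> EndO n" "(adx n ^^ p) d = M n (monom 1 l)"
    using exists_adx_pow_eq_M_monom[OF assms] .
  have "(adx n ^^ p) (M n h \<circ> d) = M n h \<circ> M n (monom 1 l)"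
    using d by (simp add: adx_pow_M_comp)
  also have "\<dots> = M n g"
    by (simp add: fun_eq_iff g M_mulO M_mult mult.commute)
  finally have image: "(adx n ^^ p) (M n h \<circ> d) = M n g" .
  then have "(adx n ^^ Suc p) (M n h \<circ> d) = (\<lambda>_. 0)"
    by (simp add: adx_M)
  moreover have "M n h \<circ> d \<in> EndO n"
    by (rule EndO_comp[OF M_EndO d(1)])
  ultimately have "M n h \<circ> d \<in> Dp n p"
    by (simp add: Dp_eq)
  moreover have "g \<in> On n"
    by (simp add: g mulO_On)
  ultimately show "g \<in> adx_image n p"
    using image unfolding adx_image_def by blast
qed

lemma adx_image_eq_idealO:
  "Suc p div 2 \<le> n \<Longrightarrow> adx_image n p = (idealO n (Suc p div 2) :: 'k::field_char_0 poly set)"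
  by (intro equalityI adx_image_subset_idealO idealO_subset_adx_image) auto

lemma vexp_eq_Suc_div_2:
  "Suc p div 2 \<le> n \<Longrightarrow> vexp TYPE('k::field_char_0) n p = Suc p div 2"
  by (intro vexp_eqI adx_image_eq_idealO)

theorem lemma7:
  fixes n :: nat
  assumes "n > 0"
  shows "\<forall>l \<in> {1..n}. vexp TYPE('k::field_char_0) n (2 * l - 1) = l
                      \<and> vexp TYPE('k) n (2 * l) = l"
proof
  fix l
  assume l: "l \<in> {1..n}"
  then have "Suc (2 * l - 1) div 2 = l" "Suc (2 * l) div 2 = l"
    by auto
  then show "vexp TYPE('k) n (2 * l - 1) = l \<and> vexp TYPE('k) n (2 * l) = l"
    using l vexp_eq_Suc_div_2[of "2 * l - 1" n] vexp_eq_Suc_div_2[of "2 * l" n] by auto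
qed

end
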